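(* Let $n\ge4$ and $\lambda=(n-2,2)$, and let $m=\lfloor (n-1)/2\rfloor$. Then $P(\lambda)\setminus\{0\}$, the poset on the elements $\{1,2,\dots,n-2\}$, is as follows: its minimal elements are $\{1,2,\dots,m\}$, its maximal elements are $\{m+1,\dots,n-2\}$, and its cover relations are exactly that for each $j$ with $1\le j\le n-2-m$, the maximal element $m+j$ covers each of $j,j+1,\dots,m$ (and there are no other strict relations).
   Context: For a vector $\lambda=(\lambda_1,\dots,\lambda_d)$ of positive integers with sum $n\ge2$, let $\Delta_\lambda=\mathrm{conv}(e_1,\dots,e_d,\lambda)\subset\mathbb{R}^d$ with fundamental parallelepiped $\Pi_\lambda=\{\sum_{i=1}^d\gamma_i(1,e_i)+\gamma_{d+1}(1,\lambda):0\le\gamma_i<1\}\subset\mathbb{R}^{d+1}$. The poset $P(\lambda)$ is $\Pi_\lambda\cap\mathbb{Z}^{d+1}$ ordered by $\sigma\preceq\mu$ iff $\mu-\sigma\in\Pi_\lambda\cap\mathbb{Z}^{d+1}$; $0$ is its minimum. For $0\le b<n-1$ set $p(b)=\left(\sum_{t}\lceil b\lambda_t/(n-1)\rceil-b,\ \lceil b\lambda_1/(n-1)\rceil,\dots,\lceil b\lambda_d/(n-1)\rceil\right)$; $b\mapsto p(b)$ is a bijection from $\{0,\dots,n-2\}$ onto $\Pi_\lambda\cap\mathbb{Z}^{d+1}$, and each integer $b$ is identified with $p(b)$ (so $0$ corresponds to the origin). *)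

theory Defs
  imports Complex_Main
begin

(* Vectors in Z^{d+1} / R^{d+1} are represented as functions on nat with
   coordinates 0..d (coordinate 0 is the extra "height" coordinate) and
   value 0 at all indices > d.  lam is indexed by 1..d. *)

definition gen :: "nat \<Rightarrow> (nat \<Rightarrow> int) \<Rightarrow> nat \<Rightarrow> nat \<Rightarrow> int" where
  "gen d lam i k = (if k = 0 then 1
                    else if i \<le> d then (if k = i then 1 else 0)
                    else lam k)"

definition in_Pi :: "nat \<Rightarrow> (nat \<Rightarrow> int) \<Rightarrow> (nat \<Rightarrow> int) \<Rightarrow> bool" where
  "in_Pi d lam x \<longleftrightarrow>
     (\<forall>k>d. x k = 0) \<and>
     (\<exists>\<gamma>::nat \<Rightarrow> real. (\<forall>i\<in>{1..d+1}. 0 \<le> \<gamma> i \<and> \<gamma> i < 1) \<and>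
        (\<forall>k\<le>d. real_of_int (x k) = (\<Sum>i=1..d+1. \<gamma> i * real_of_int (gen d lam i k))))"

definition Pset :: "nat \<Rightarrow> (nat \<Rightarrow> int) \<Rightarrow> (nat \<Rightarrow> int) set" where
  "Pset d lam = {x. in_Pi d lam x}"

definition Ple :: "nat \<Rightarrow> (nat \<Rightarrow> int) \<Rightarrow> (nat \<Rightarrow> int) \<Rightarrow> (nat \<Rightarrow> int) \<Rightarrow> bool" where
  "Ple d lam \<sigma> \<mu> \<longleftrightarrow> in_Pi d lam \<sigma> \<and> in_Pi d lam \<mu> \<and> in_Pi d lam (\<lambda>k. \<mu> k - \<sigma> k)"

definition Plt :: "nat \<Rightarrow> (nat \<Rightarrow> int) \<Rightarrow> (nat \<Rightarrow> int) \<Rightarrow> (nat \<Rightarrow> int) \<Rightarrow> bool" where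
  "Plt d lam \<sigma> \<mu> \<longleftrightarrow> Ple d lam \<sigma> \<mu> \<and> \<sigma> \<noteq> \<mu>"

definition Pcovers_in :: "nat \<Rightarrow> (nat \<Rightarrow> int) \<Rightarrow> (nat \<Rightarrow> int) set \<Rightarrow> (nat \<Rightarrow> int) \<Rightarrow> (nat \<Rightarrow> int) \<Rightarrow> bool" where
  "Pcovers_in d lam S \<sigma> \<mu> \<longleftrightarrow> \<sigma> \<in> S \<and> \<mu> \<in> S \<and> Plt d lam \<sigma> \<mu> \<and>
      \<not> (\<exists>\<tau>\<in>S. Plt d lam \<sigma> \<tau> \<and> Plt d lam \<tau> \<mu>)"

definition pt :: "nat \<Rightarrow> (nat \<Rightarrow> int) \<Rightarrow> nat \<Rightarrow> nat \<Rightarrow> int" where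
  "pt d lam b k = (let n = (\<Sum>t=1..d. lam t) in
     if k = 0 then (\<Sum>t=1..d. \<lceil>real b * real_of_int (lam t) / real_of_int (n - 1)\<rceil>) - int b
     else if k \<le> d then \<lceil>real b * real_of_int (lam k) / real_of_int (n - 1)\<rceil>
     else 0)"

end

theory Submission
  imports Defs
begin

(* For lam = (n - 2, 2) a point x = sum gamma_i (1, e_i) + gamma_3 (1, lam) satisfies
   x1 + x2 - x0 = gamma_3 (n - 1), so b := x1 + x2 - x0 is an integer in [0, n - 2] with
   gamma_3 = b / (n - 1).  Integrality then forces x1 = b and x0 = x2 = ceil (2b / (n - 1)),
   i.e. x = p(b); this level is 0 at b = 0, 1 on 1..m and 2 on m+1..n-2.  Hence p(c) - p(b)
   lies in the parallelepiped iff b <= c and level c = level b + level (c - b); for b < c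
   both summands are at least 1, so this means b <= m < c <= b + m.  There are no chains of
   length two, so every strict relation is a cover. *)

lemma in_Pi_2_iff:
  "in_Pi 2 lam x \<longleftrightarrow> (\<forall>k>2. x k = 0) \<and>
     (\<exists>g1 g2 g3::real. 0 \<le> g1 \<and> g1 < 1 \<and> 0 \<le> g2 \<and> g2 < 1 \<and> 0 \<le> g3 \<and> g3 < 1 \<and>
        x 0 = g1 + g2 + g3 \<and> x 1 = g1 + g3 * lam 1 \<and> x 2 = g2 + g3 * lam 2)"
    (is "_ \<longleftrightarrow> _ \<and> (\<exists>g1 g2 g3. ?C g1 g2 g3)")
proof -
  have gens: "{1..2+1::nat} = {1, 2, 3}" by auto
  have coords: "(\<forall>k\<le>2. P k) \<longleftrightarrow> P 0 \<and> P 1 \<and> P (2::nat)" for P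
    by (auto simp: le_Suc_eq numeral_2_eq_2)
  have "in_Pi 2 lam x \<longleftrightarrow> (\<forall>k>2. x k = 0) \<and> (\<exists>\<gamma>::nat \<Rightarrow> real. ?C (\<gamma> 1) (\<gamma> 2) (\<gamma> 3))"
    unfolding in_Pi_def gens coords by (simp add: gen_def algebra_simps conj_ac)
  also have "(\<exists>\<gamma>::nat \<Rightarrow> real. ?C (\<gamma> 1) (\<gamma> 2) (\<gamma> 3)) \<longleftrightarrow> (\<exists>g1 g2 g3. ?C g1 g2 g3)"
  proof
    assume "\<exists>g1 g2 g3. ?C g1 g2 g3"
    then obtain g1 g2 g3 where "?C g1 g2 g3" by blast
    then show "\<exists>\<gamma>::nat \<Rightarrow> real. ?C (\<gamma> 1) (\<gamma> 2) (\<gamma> 3)"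
      by (intro exI[of _ "\<lambda>i. if i = 1 then g1 else if i = 2 then g2 else g3"]) simp
  qed blast
  finally show ?thesis .
qed

lemma pt_0: "pt d lam 0 = (\<lambda>k. 0)"
  by (simp add: pt_def Let_def fun_eq_iff)

definition lam2 :: "nat \<Rightarrow> nat \<Rightarrow> int" where
  "lam2 n k = (if k = 1 then int n - 2 else 2)"

definition level :: "nat \<Rightarrow> nat \<Rightarrow> int" where
  "level n b = (if b = 0 then 0 else if b \<le> (n - 1) div 2 then 1 else 2)"

lemma ceiling_eq_level:
  assumes "b \<le> n - 2"
  shows "\<lceil>real b * 2 / (real n - 1)\<rceil> = level n b"
proof (cases "b = 0")
  case False
  then have n: "real n - 1 > 0" "real b \<le> real n - 2" using assms by linarith+
  show ?thesis
  proof (cases "b \<le> (n - 1) div 2")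
    case True
    then have "2 * b \<le> n - 1" by presburger
    then have "real b * 2 \<le> real n - 1" using n by linarith
    then have "\<lceil>real b * 2 / (real n - 1)\<rceil> = 1"
      using n \<open>b \<noteq> 0\<close> by (intro ceiling_unique) (simp_all add: field_simps)
    then show ?thesis using True \<open>b \<noteq> 0\<close> by (simp add: level_def)
  next
    case False
    then have "2 * b > n - 1" by presburger
    then have "real b * 2 > real n - 1" using n by linarith
    then have "\<lceil>real b * 2 / (real n - 1)\<rceil> = 2"
      using n by (intro ceiling_unique) (simp_all add: field_simps)
    then show ?thesis using False \<open>b \<noteq> 0\<close> by (simp add: level_def)
  qed
qed (simp add: level_def)

lemma ceiling_eq_index:
  assumes "b \<le> n - 2"
  shows "\<lceil>real b * (real n - 2) / (real n - 1)\<rceil> = int b"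
proof (cases "b = 0")
  case False
  then have "real n - 1 > 0" "real b \<le> real n - 2" using assms by linarith+
  then show ?thesis by (intro ceiling_unique) (simp_all add: field_simps)
qed simp

lemma pt_lam2:
  assumes "b \<le> n - 2"
  shows "pt 2 (lam2 n) b = (\<lambda>k. if k = 0 \<or> k = 2 then level n b else if k = 1 then int b else 0)"
proof -
  have "(\<Sum>t=1..2. lam2 n t) = int n" by (simp add: lam2_def numeral_2_eq_2)
  moreover have "real_of_int (int n - 1) = real n - 1" "real_of_int (int n - 2) = real n - 2"
    by simp_all
  ultimately show ?thesis
    using ceiling_eq_level[OF assms] ceiling_eq_index[OF assms]
    by (auto simp: pt_def lam2_def numeral_2_eq_2 level_def)
qed

lemma in_Pi_lam2_imp_pt:
  assumes "2 \<le> n" "in_Pi 2 (lam2 n) x"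
  obtains b where "b \<le> n - 2" "x = pt 2 (lam2 n) b"
proof -
  obtain g1 g2 g3 :: real where g: "0 \<le> g1" "g1 < 1" "0 \<le> g2" "g2 < 1" "0 \<le> g3" "g3 < 1"
    and x0: "x 0 = g1 + g2 + g3" and x1: "x 1 = g1 + g3 * (real n - 2)"
    and x2: "x 2 = g2 + g3 * 2" and zero: "\<forall>k>2. x k = 0"
    using assms(2) unfolding in_Pi_2_iff by (auto simp: lam2_def)
  have n: "real n - 1 > 0" using assms(1) by simp
  define B where "B = x 1 + x 2 - x 0"
  have B: "real_of_int B = g3 * (real n - 1)"
    using x0 x1 x2 by (simp add: B_def algebra_simps)
  then have "0 \<le> real_of_int B" "real_of_int B < real n - 1"
    using g n by simp_all
  moreover obtain b where "B = int b"
    using \<open>0 \<le> real_of_int B\<close> nonneg_int_cases by fastforce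
  ultimately have b: "B = int b" "b \<le> n - 2" by linarith+
  have "\<bar>real_of_int (x 1 - B)\<bar> < 1" using x1 B g by (simp add: algebra_simps)
  then have xb: "x 1 = int b" using b by linarith
  have "real b * 2 / (real n - 1) = g3 * 2" using B b n by (simp add: field_simps)
  then have "\<lceil>g3 * 2\<rceil> = level n b" using ceiling_eq_level[OF b(2)] by simp
  moreover have "\<lceil>g3 * 2\<rceil> = x 2" using x2 g by (intro ceiling_unique) simp_all
  ultimately have xl: "x 2 = level n b" "x 0 = level n b" using xb b B_def by simp_all
  show thesis
  proof
    show "b \<le> n - 2" using b by simp
    show "x = pt 2 (lam2 n) b"
      unfolding pt_lam2[OF b(2)] using xb xl zero by (auto simp: fun_eq_iff not_le)
  qed
qed

lemma pt_lam2_in_Pi: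
  assumes "2 \<le> n" "b \<le> n - 2"
  shows "in_Pi 2 (lam2 n) (pt 2 (lam2 n) b)"
proof -
  define t where "t = real b / (real n - 1)"
  have n: "real n - 1 > 0" "real b \<le> real n - 2" using assms by linarith+
  then have t: "0 \<le> t" "t < 1" "real b = t * (real n - 1)" by (simp_all add: t_def field_simps)
  have "\<lceil>t * 2\<rceil> = level n b" using ceiling_eq_level[OF assms(2)] by (simp add: t_def)
  then have "0 \<le> level n b - t * 2" "level n b - t * 2 < 1" by linarith+
  then show ?thesis
    unfolding in_Pi_2_iff pt_lam2[OF assms(2)] using t
    by (intro conjI exI[of _ t] exI[of _ "level n b - t * 2"]) (auto simp: lam2_def algebra_simps)
qed

lemma Pset_lam2:
  assumes "2 \<le> n"
  shows "Pset 2 (lam2 n) = pt 2 (lam2 n) ` {0..n - 2}"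
  using in_Pi_lam2_imp_pt[OF assms] pt_lam2_in_Pi[OF assms] unfolding Pset_def by fastforce

lemma pt_lam2_inject:
  assumes "b \<le> n - 2" "c \<le> n - 2"
  shows "pt 2 (lam2 n) b = pt 2 (lam2 n) c \<longleftrightarrow> b = c"
proof
  assume "pt 2 (lam2 n) b = pt 2 (lam2 n) c"
  then have "pt 2 (lam2 n) b 1 = pt 2 (lam2 n) c 1" by simp
  then show "b = c" by (simp add: pt_lam2 assms)
qed simp

lemma inj_on_pt_lam2: "inj_on (pt 2 (lam2 n)) {0..n - 2}"
  using pt_lam2_inject by (auto intro: inj_onI)

lemma bij_betw_pt_lam2:
  assumes "2 \<le> n"
  shows "bij_betw (pt 2 (lam2 n)) {0..n - 2} (Pset 2 (lam2 n))"
  unfolding bij_betw_def using inj_on_pt_lam2 Pset_lam2[OF assms] by simp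

lemma Ple_pt_lam2_iff:
  assumes "2 \<le> n" "b \<le> n - 2" "c \<le> n - 2"
  shows "Ple 2 (lam2 n) (pt 2 (lam2 n) b) (pt 2 (lam2 n) c) \<longleftrightarrow>
    b \<le> c \<and> level n c = level n b + level n (c - b)"
proof
  assume "Ple 2 (lam2 n) (pt 2 (lam2 n) b) (pt 2 (lam2 n) c)"
  then obtain e where "e \<le> n - 2"
    and e: "(\<lambda>k. pt 2 (lam2 n) c k - pt 2 (lam2 n) b k) = pt 2 (lam2 n) e"
    unfolding Ple_def using in_Pi_lam2_imp_pt[OF assms(1)] by blast
  then have "int c - int b = int e" "level n c - level n b = level n e"
    using fun_cong[OF e, of 1] fun_cong[OF e, of 2] by (simp_all add: pt_lam2 assms)
  moreover from this(1) have "b \<le> c" "e = c - b" by linarith+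
  ultimately show "b \<le> c \<and> level n c = level n b + level n (c - b)" by simp
next
  assume "b \<le> c \<and> level n c = level n b + level n (c - b)"
  then have "(\<lambda>k. pt 2 (lam2 n) c k - pt 2 (lam2 n) b k) = pt 2 (lam2 n) (c - b)"
    using assms by (simp add: pt_lam2 fun_eq_iff of_nat_diff)
  then show "Ple 2 (lam2 n) (pt 2 (lam2 n) b) (pt 2 (lam2 n) c)"
    unfolding Ple_def using pt_lam2_in_Pi assms by simp
qed

lemma Plt_pt_lam2_iff:
  assumes "2 \<le> n" "b \<in> {1..n - 2}" "c \<in> {1..n - 2}"
  shows "Plt 2 (lam2 n) (pt 2 (lam2 n) b) (pt 2 (lam2 n) c) \<longleftrightarrow>
    b \<le> (n - 1) div 2 \<and> (n - 1) div 2 < c \<and> c \<le> b + (n - 1) div 2"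
  using assms Ple_pt_lam2_iff[OF assms(1)] pt_lam2_inject[of b n c]
  by (auto simp: Plt_def level_def)

lemma Pset_lam2_minus_origin:
  assumes "2 \<le> n"
  shows "Pset 2 (lam2 n) - {\<lambda>k. 0} = pt 2 (lam2 n) ` {1..n - 2}"
proof -
  have "{1..n - 2} = {0..n - 2} - {0}" by auto
  then show ?thesis
    unfolding Pset_lam2[OF assms] pt_0[of 2 "lam2 n", symmetric]
    using inj_on_pt_lam2[of n] by (simp add: inj_on_image_set_diff)
qed

lemma Pcovers_in_lam2_iff_Plt:
  assumes "2 \<le> n" "b \<in> {1..n - 2}" "c \<in> {1..n - 2}"
  shows "Pcovers_in 2 (lam2 n) (Pset 2 (lam2 n) - {\<lambda>k. 0}) (pt 2 (lam2 n) b) (pt 2 (lam2 n) c)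
    \<longleftrightarrow> Plt 2 (lam2 n) (pt 2 (lam2 n) b) (pt 2 (lam2 n) c)"
  using assms Plt_pt_lam2_iff[OF assms(1)]
  unfolding Pcovers_in_def Pset_lam2_minus_origin[OF assms(1)] by fastforce

theorem proposition2p15:
  fixes n :: nat
  assumes "n \<ge> 4"
  defines "lam \<equiv> (\<lambda>k::nat. if k = 1 then int n - 2 else 2)"
  defines "m \<equiv> (n - 1) div 2"
  defines "P' \<equiv> Pset 2 lam - {\<lambda>k. 0}"
  shows "bij_betw (pt 2 lam) {0..n-2} (Pset 2 lam) \<and>
       pt 2 lam 0 = (\<lambda>k. 0) \<and>
       {x \<in> P'. \<not> (\<exists>y\<in>P'. Plt 2 lam y x)} = pt 2 lam ` {1..m} \<and>
       {x \<in> P'. \<not> (\<exists>y\<in>P'. Plt 2 lam x y)} = pt 2 lam ` {m+1..n-2} \<and>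
       (\<forall>b\<in>{1..n-2}. \<forall>c\<in>{1..n-2}.
           Pcovers_in 2 lam P' (pt 2 lam b) (pt 2 lam c) \<longleftrightarrow>
           (\<exists>j\<in>{1..n-2-m}. c = m + j \<and> b \<in> {j..m})) \<and>
       (\<forall>b\<in>{1..n-2}. \<forall>c\<in>{1..n-2}.
           Plt 2 lam (pt 2 lam b) (pt 2 lam c) \<longleftrightarrow>
           Pcovers_in 2 lam P' (pt 2 lam b) (pt 2 lam c))"
proof -
  have n: "2 \<le> n" using assms(1) by simp
  have lam: "lam = lam2 n" by (simp add: lam_def lam2_def fun_eq_iff)
  have m: "1 \<le> m" "m < n - 2" "n - 2 \<le> 2 * m" using assms(1) unfolding m_def by presburger+
  have P': "P' = pt 2 lam ` {1..n - 2}"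
    unfolding P'_def lam by (rule Pset_lam2_minus_origin[OF n])
  have lt: "Plt 2 lam (pt 2 lam b) (pt 2 lam c) \<longleftrightarrow> b \<le> m \<and> m < c \<and> c \<le> b + m"
    if "b \<in> {1..n - 2}" "c \<in> {1..n - 2}" for b c
    unfolding lam m_def using Plt_pt_lam2_iff[OF n that] .
  have covers: "Pcovers_in 2 lam P' (pt 2 lam b) (pt 2 lam c) \<longleftrightarrow>
      Plt 2 lam (pt 2 lam b) (pt 2 lam c)" if "b \<in> {1..n - 2}" "c \<in> {1..n - 2}" for b c
    unfolding P'_def lam using Pcovers_in_lam2_iff_Plt[OF n that] .
  have minimal:
    "{c \<in> {1..n - 2}. \<not> (\<exists>b\<in>{1..n - 2}. Plt 2 lam (pt 2 lam b) (pt 2 lam c))} = {1..m}"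
    using lt m by (auto dest: bspec[where x = m])
  have maximal:
    "{b \<in> {1..n - 2}. \<not> (\<exists>c\<in>{1..n - 2}. Plt 2 lam (pt 2 lam b) (pt 2 lam c))} = {m+1..n - 2}"
    using lt m by (auto dest: bspec[where x = "m + 1"])
  have crown: "(\<exists>j\<in>{1..n - 2 - m}. c = m + j \<and> b \<in> {j..m}) \<longleftrightarrow>
      b \<le> m \<and> m < c \<and> c \<le> b + m" if "c \<le> n - 2" for b c
    using that by (auto intro!: bexI[of _ "c - m"])
  show ?thesis
  proof (intro conjI)
    show "bij_betw (pt 2 lam) {0..n - 2} (Pset 2 lam)"
      unfolding lam by (rule bij_betw_pt_lam2[OF n])
    show "{x \<in> P'. \<not> (\<exists>y\<in>P'. Plt 2 lam y x)} = pt 2 lam ` {1..m}"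
      unfolding P' minimal[symmetric] by blast
    show "{x \<in> P'. \<not> (\<exists>y\<in>P'. Plt 2 lam x y)} = pt 2 lam ` {m + 1..n - 2}"
      unfolding P' maximal[symmetric] by blast
  qed (use covers lt crown pt_0 in simp_all)
qed

end
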